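(* Let $B$ be a finite block size, $c\ge1$ an integer, $\gamma\in(0,1]$, and $k,k'$ positive integers with $k+k'=B$ and $1\le k'\le\lfloor \gamma k/c\rfloor$. The burning second-price auction with parameters $(B,c,\gamma,k,k')$ satisfies UIC, MIC and $c$-SCP under $\gamma$-strict utility.
   Context: Setting (TFM). Users $i$ have true values $v_i\ge0$ and submit single bids $b_i\ge0$. A block holds at most $B$ transactions. A TFM has an inclusion rule (run by the miner, selecting at most $B$ bids), and confirmation, payment and miner-revenue rules (run by the blockchain on the included bids, possibly using trusted on-chain randomness revealed after inclusion); confirmed bids pay at most their bid, unconfirmed bids pay $0$, the miner receives at most the total payment and the rest is burnt. Burning second-price auction with parameters $(B,c,\gamma,k,k')$: Inclusion: include the $B$ highest bids (ties broken arbitrarily), denoted $b_1\ge\dots\ge b_B$; empty slots count as bids of $0$. Confirmation: using on-chain randomness choose a uniformly random subset $S\subseteq\{b_1,\dots,b_k\}$ of size exactly $\lfloor\gamma k/c\rfloor$; exactly the bids in $S$ are confirmed. Payment: each confirmed bid pays $b_{k+1}$. Miner revenue: $\gamma(b_{k+1}+\dots+b_{k+k'})$; remaining payment is burnt. Strategic players: a single user, the miner, or a coalition of the miner with some users. They may have their users bid untruthfully after seeing all other bids, inject fake bids (true value $0$), and, if the miner is involved, include any set of at most $B$ available bids instead of following the inclusion rule. $\gamma$-strict utility of a player: the miner's revenue (if the miner belongs to the player), plus $v-p$ for each confirmed transaction of the player with true value $v$ and payment $p$, minus $\gamma(b-v)$ for each unconfirmed transaction of the player whose bid $b$ exceeds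 its true value $v$; expected utilities are used. Under $\gamma$-strict utility: UIC — assuming the miner follows the mechanism, each user's expected utility is maximized by truthful bidding without fake bids, whatever the other bids; MIC — the miner's expected utility is maximized by following the inclusion rule without fake bids, whatever the bids; $c$-SCP — for every coalition of the miner with between $1$ and $c$ users, expected joint utility is maximized by truthful bidding and honest miner behavior, whatever the other bids. *)

theory Defs
  imports "HOL-Probability.Probability"
begin

text \<open>Bids are a list bs of reals; transactions are identified by their index into bs.
  A block is an ordered list of distinct indices (the included transactions, listed
  in non-increasing order of bid, ties broken arbitrarily). Slot j (0-based) holds
  bid b_(j+1); empty slots count as bids of 0.\<close>

definition valid_block :: "nat \<Rightarrow> real list \<Rightarrow> nat list \<Rightarrow> bool" where
  "valid_block B bs blk \<longleftrightarrow>
     distinct blk \<and> set blk \<subseteq> {..<length bs} \<and> length blk \<le> B \<and>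
     sorted_wrt (\<lambda>i j. bs ! j \<le> bs ! i) blk"

definition honest_block :: "nat \<Rightarrow> real list \<Rightarrow> nat list \<Rightarrow> bool" where
  "honest_block B bs blk \<longleftrightarrow>
     valid_block B bs blk \<and> length blk = min B (length bs) \<and>
     (\<forall>i\<in>set blk. \<forall>j<length bs. j \<notin> set blk \<longrightarrow> bs ! j \<le> bs ! i)"

definition slot :: "real list \<Rightarrow> nat list \<Rightarrow> nat \<Rightarrow> real" where
  "slot bs blk j = (if j < length blk then bs ! (blk ! j) else 0)"

definition n_conf :: "nat \<Rightarrow> real \<Rightarrow> nat \<Rightarrow> nat" where
  "n_conf c \<gamma> k = nat \<lfloor>\<gamma> * real k / real c\<rfloor>"

text \<open>On-chain randomness: a uniformly random set of exactly n_conf positions among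
  the top k positions 0..k-1.\<close>
definition conf_sets :: "nat \<Rightarrow> nat \<Rightarrow> nat set set" where
  "conf_sets k m = {S. S \<subseteq> {..<k} \<and> card S = m}"

definition confirmed :: "nat list \<Rightarrow> nat set \<Rightarrow> nat set" where
  "confirmed blk S = {blk ! j | j. j \<in> S \<and> j < length blk}"

text \<open>Price paid by every confirmed bid: b_(k+1) (slot k, 0-based).\<close>
definition price :: "nat \<Rightarrow> real list \<Rightarrow> nat list \<Rightarrow> real" where
  "price k bs blk = slot bs blk k"

definition miner_rev :: "real \<Rightarrow> nat \<Rightarrow> nat \<Rightarrow> real list \<Rightarrow> nat list \<Rightarrow> real" where
  "miner_rev \<gamma> k k' bs blk = \<gamma> * (\<Sum>j\<in>{k..<k+k'}. slot bs blk j)"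

definition strict_util ::
  "real \<Rightarrow> nat \<Rightarrow> nat \<Rightarrow> real list \<Rightarrow> nat list \<Rightarrow> nat set \<Rightarrow> nat set \<Rightarrow> (nat \<Rightarrow> real) \<Rightarrow> bool \<Rightarrow> real" where
  "strict_util \<gamma> k k' bs blk S P val minerIn =
     (if minerIn then miner_rev \<gamma> k k' bs blk else 0) +
     (\<Sum>i\<in>P. if i \<in> confirmed blk S then val i - price k bs blk
              else if bs ! i > val i then - \<gamma> * (bs ! i - val i) else 0)"

definition exp_util ::
  "nat \<Rightarrow> real \<Rightarrow> nat \<Rightarrow> nat \<Rightarrow> real list \<Rightarrow> nat list \<Rightarrow> nat set \<Rightarrow> (nat \<Rightarrow> real) \<Rightarrow> bool \<Rightarrow> real" where
  "exp_util c \<gamma> k k' bs blk P val minerIn =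
     measure_pmf.expectation (pmf_of_set (conf_sets k (n_conf c \<gamma> k)))
       (\<lambda>S. strict_util \<gamma> k k' bs blk S P val minerIn)"

definition nonneg :: "real list \<Rightarrow> bool" where
  "nonneg xs \<longleftrightarrow> (\<forall>x\<in>set xs. 0 \<le> x)"

text \<open>Coalition layout: bids are others @ own @ fakes. The coalition's real
  transactions have indices [length others ..< length others + length vs] with true
  values vs; fake bids (true value 0) follow.\<close>
definition coal_idx :: "real list \<Rightarrow> nat \<Rightarrow> nat set" where
  "coal_idx others n = {length others..<length others + n}"

definition fake_idx :: "real list \<Rightarrow> nat \<Rightarrow> real list \<Rightarrow> nat set" where
  "fake_idx others n fakes = {length others + n..<length others + n + length fakes}"

definition coal_val :: "real list \<Rightarrow> real list \<Rightarrow> nat \<Rightarrow> real" where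
  "coal_val others vs i =
     (if length others \<le> i \<and> i < length others + length vs then vs ! (i - length others) else 0)"

definition BSPA_UIC :: "nat \<Rightarrow> nat \<Rightarrow> real \<Rightarrow> nat \<Rightarrow> nat \<Rightarrow> bool" where
  "BSPA_UIC B c \<gamma> k k' \<longleftrightarrow>
     (\<forall>others v b fakes blk blk'.
        nonneg others \<longrightarrow> 0 \<le> v \<longrightarrow> 0 \<le> b \<longrightarrow> nonneg fakes \<longrightarrow>
        honest_block B (others @ [v]) blk \<longrightarrow>
        honest_block B (others @ [b] @ fakes) blk' \<longrightarrow>
        exp_util c \<gamma> k k' (others @ [b] @ fakes) blk'
            (coal_idx others 1 \<union> fake_idx others 1 fakes) (coal_val others [v]) False
          \<le> exp_util c \<gamma> k k' (others @ [v]) blk (coal_idx others 1) (coal_val others [v]) False)"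

definition BSPA_MIC :: "nat \<Rightarrow> nat \<Rightarrow> real \<Rightarrow> nat \<Rightarrow> nat \<Rightarrow> bool" where
  "BSPA_MIC B c \<gamma> k k' \<longleftrightarrow>
     (\<forall>bs fakes blk blk'.
        nonneg bs \<longrightarrow> nonneg fakes \<longrightarrow>
        honest_block B bs blk \<longrightarrow>
        valid_block B (bs @ fakes) blk' \<longrightarrow>
        exp_util c \<gamma> k k' (bs @ fakes) blk' (fake_idx bs 0 fakes) (\<lambda>_. 0) True
          \<le> exp_util c \<gamma> k k' bs blk {} (\<lambda>_. 0) True)"

definition BSPA_SCP :: "nat \<Rightarrow> nat \<Rightarrow> real \<Rightarrow> nat \<Rightarrow> nat \<Rightarrow> bool" where
  "BSPA_SCP B c \<gamma> k k' \<longleftrightarrow>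
     (\<forall>others vs ws fakes blk blk'.
        1 \<le> length vs \<longrightarrow> length vs \<le> c \<longrightarrow> length ws = length vs \<longrightarrow>
        nonneg others \<longrightarrow> nonneg vs \<longrightarrow> nonneg ws \<longrightarrow> nonneg fakes \<longrightarrow>
        honest_block B (others @ vs) blk \<longrightarrow>
        valid_block B (others @ ws @ fakes) blk' \<longrightarrow>
        exp_util c \<gamma> k k' (others @ ws @ fakes) blk'
            (coal_idx others (length vs) \<union> fake_idx others (length vs) fakes)
            (coal_val others vs) True
          \<le> exp_util c \<gamma> k k' (others @ vs) blk (coal_idx others (length vs))
            (coal_val others vs) True)"

end

theory Submission
  imports Defs
begin

text \<open>Let r = m/k with m = \<lfloor>\<gamma> k / c\<rfloor>. Each of the top k included transactions is confirmed
  with probability r at price p = b_(k+1), so a truthful transaction earns r max(v - p, 0), while an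
  overbid costs \<gamma> times the excess whenever it is not confirmed; this makes raising one's own bid
  or injecting fake bids never profitable. A user who enters the top k by deviating cannot have lowered
  the price. A coalition of the miner with n \<le> c users that lowers the price from p to p' gains at most
  n r max(p - p', 0) \<le> \<gamma> max(p - p', 0) on its users' transactions, whereas the miner's revenue
  \<gamma> (b_(k+1) + \<dots> + b_(k+k')), valued at the true bids, drops by at least \<gamma> max(p - p', 0),
  because the honest block already holds the k + k' highest bids.\<close>

section \<open>Random confirmation\<close>

lemma finite_conf_sets: "finite (conf_sets k m)"
  unfolding conf_sets_def by (rule finite_subset[of _ "Pow {..<k}"]) auto

lemma card_conf_sets: "card (conf_sets k m) = k choose m"
  unfolding conf_sets_def using n_subsets[of "{..<k}" m] by simp

lemma conf_sets_nonempty: "m \<le> k \<Longrightarrow> conf_sets k m \<noteq> {}"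
  using card_conf_sets[of k m] by (metis card.empty zero_less_binomial_iff less_irrefl)

lemma card_conf_sets_containing:
  assumes "j < k" "1 \<le> m"
  shows "card {S \<in> conf_sets k m. j \<in> S} = (k - 1) choose (m - 1)"
proof -
  let ?T = "{T. T \<subseteq> {..<k} - {j} \<and> card T = m - 1}"
  have "{S \<in> conf_sets k m. j \<in> S} = insert j ` ?T"
  proof (intro set_eqI iffI)
    fix S assume "S \<in> {S \<in> conf_sets k m. j \<in> S}"
    hence S: "S \<subseteq> {..<k}" "card S = m" "j \<in> S" by (auto simp: conf_sets_def)
    hence "S - {j} \<in> ?T" using finite_subset[OF S(1)] by auto
    thus "S \<in> insert j ` ?T" using S(3) by (intro image_eqI[of _ _ "S - {j}"]) auto
  next
    fix S assume "S \<in> insert j ` ?T"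
    then obtain T where T: "T \<subseteq> {..<k} - {j}" "card T = m - 1" "S = insert j T" by blast
    thus "S \<in> {S \<in> conf_sets k m. j \<in> S}"
      using finite_subset[OF T(1)] assms by (auto simp: conf_sets_def card_insert_if)
  qed
  moreover have "inj_on (insert j) ?T" by (rule inj_onI) blast
  ultimately have "card {S \<in> conf_sets k m. j \<in> S} = card ?T" by (simp add: card_image)
  also have "\<dots> = card ({..<k} - {j}) choose (m - 1)" by (rule n_subsets) simp
  finally show ?thesis using assms by simp
qed

lemma expectation_conf_sets_mem:
  fixes a b :: real
  assumes "j < k" "1 \<le> m" "m \<le> k"
  shows "measure_pmf.expectation (pmf_of_set (conf_sets k m)) (\<lambda>S. if j \<in> S then a else b)
    = real m / real k * a + (1 - real m / real k) * b"
proof -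
  let ?C = "conf_sets k m" and ?J = "{S \<in> conf_sets k m. j \<in> S}"
  have J: "?J \<subseteq> ?C" "finite ?J" using finite_conf_sets by auto
  have ratio: "real (card ?J) = real m / real k * real (card ?C)"
  proof -
    have "real m * real (k choose m) = real k * real ((k - 1) choose (m - 1))"
      using times_binomial_minus1_eq[of m k] assms(2) by (metis of_nat_mult less_eq_Suc_le One_nat_def)
    thus ?thesis using card_conf_sets_containing[OF assms(1,2)] card_conf_sets assms
      by (simp add: field_simps)
  qed
  have "(\<Sum>S\<in>?C. if j \<in> S then a else b) = real (card ?J) * a + real (card (?C - ?J)) * b"
  proof -
    have "?C \<inter> {S. j \<in> S} = ?J" "?C \<inter> - {S. j \<in> S} = ?C - ?J" by auto
    thus ?thesis by (simp add: sum.If_cases[OF finite_conf_sets])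
  qed
  also have "\<dots> = real (card ?C) * (real m / real k * a + (1 - real m / real k) * b)"
  proof -
    have "real (card (?C - ?J)) = real (card ?C) - real (card ?J)"
      using J finite_conf_sets by (simp add: card_Diff_subset card_mono)
    moreover have "\<And>x y r :: real. y = r * x \<Longrightarrow> y * a + (x - y) * b = x * (r * a + (1 - r) * b)"
      by (simp add: algebra_simps)
    ultimately show ?thesis using ratio by metis
  qed
  finally show ?thesis
    using finite_conf_sets conf_sets_nonempty[OF assms(3)] by (simp add: integral_pmf_of_set)
qed

lemma confirmed_iff_mem_index:
  assumes "distinct blk" "j < length blk"
  shows "blk ! j \<in> confirmed blk S \<longleftrightarrow> j \<in> S"
  using assms unfolding confirmed_def by (auto simp: nth_eq_iff_index_eq)

lemma not_confirmed_outside_top: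
  assumes "i \<notin> set (take k blk)" "S \<in> conf_sets k m"
  shows "i \<notin> confirmed blk S"
  using assms unfolding confirmed_def conf_sets_def by (fastforce simp: in_set_conv_nth)

lemma expectation_confirmed:
  fixes a b :: real
  assumes "distinct blk" "1 \<le> m" "m \<le> k"
  shows "measure_pmf.expectation (pmf_of_set (conf_sets k m)) (\<lambda>S. if i \<in> confirmed blk S then a else b)
    = (if i \<in> set (take k blk) then real m / real k * a + (1 - real m / real k) * b else b)"
proof (cases "i \<in> set (take k blk)")
  case True
  then obtain j where "j < k" "j < length blk" "i = blk ! j" by (auto simp: in_set_conv_nth)
  thus ?thesis using True expectation_conf_sets_mem assms confirmed_iff_mem_index by simp
next
  case False
  have "(\<Sum>S\<in>conf_sets k m. if i \<in> confirmed blk S then a else b) = (\<Sum>S\<in>conf_sets k m. b)"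
    using not_confirmed_outside_top[OF False] by simp
  thus ?thesis using False finite_conf_sets conf_sets_nonempty[OF assms(3)]
    by (simp add: integral_pmf_of_set)
qed

lemma n_conf_le:
  assumes "1 \<le> c" "0 \<le> \<gamma>" "\<gamma> \<le> 1"
  shows "real (n_conf c \<gamma> k) * real c \<le> \<gamma> * real k" "n_conf c \<gamma> k \<le> k"
proof -
  have "real (n_conf c \<gamma> k) \<le> \<gamma> * real k / real c"
    unfolding n_conf_def using assms by simp
  thus "real (n_conf c \<gamma> k) * real c \<le> \<gamma> * real k" using assms by (simp add: field_simps)
  have "\<gamma> * real k \<le> real k * real c"
    using assms mult_left_le_one_le[of "real k" \<gamma>] mult_left_mono[of 1 "real c" "real k"] by simp
  hence "\<gamma> * real k / real c \<le> real k" using assms by (simp add: divide_le_eq)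
  thus "n_conf c \<gamma> k \<le> k" using \<open>real (n_conf c \<gamma> k) \<le> _\<close> by linarith
qed

lemma n_conf_range:
  assumes "1 \<le> c" "0 < \<gamma>" "\<gamma> \<le> 1" "1 \<le> k'" "k' \<le> n_conf c \<gamma> k"
  shows "1 \<le> n_conf c \<gamma> k" "n_conf c \<gamma> k \<le> k"
  using assms n_conf_le[OF assms(1)] by auto

definition overbid_penalty :: "real \<Rightarrow> real \<Rightarrow> real \<Rightarrow> real" where
  "overbid_penalty \<gamma> v b = (if v < b then - \<gamma> * (b - v) else 0)"

definition expected_tx_util :: "real \<Rightarrow> real \<Rightarrow> bool \<Rightarrow> real \<Rightarrow> real \<Rightarrow> real \<Rightarrow> real" where
  "expected_tx_util \<gamma> r in_top v b p =
     (if in_top then r * (v - p) + (1 - r) * overbid_penalty \<gamma> v b else overbid_penalty \<gamma> v b)"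

lemma exp_util_eq_sum:
  assumes "distinct blk" "finite P" "1 \<le> n_conf c \<gamma> k" "n_conf c \<gamma> k \<le> k"
  shows "exp_util c \<gamma> k k' bs blk P val mi = (if mi then miner_rev \<gamma> k k' bs blk else 0)
    + (\<Sum>i\<in>P. expected_tx_util \<gamma> (real (n_conf c \<gamma> k) / real k) (i \<in> set (take k blk))
                 (val i) (bs ! i) (price k bs blk))"
proof -
  let ?M = "pmf_of_set (conf_sets k (n_conf c \<gamma> k))"
  have int: "integrable ?M f" for f :: "nat set \<Rightarrow> real"
    using finite_conf_sets conf_sets_nonempty[OF assms(4)] by (intro integrable_measure_pmf_finite) simp
  show ?thesis
    unfolding exp_util_def strict_util_def expected_tx_util_def overbid_penalty_def
    using assms expectation_confirmed[OF assms(1,3,4)] int by simp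
qed

section \<open>Slots and prices of a block\<close>

lemma nonneg_append [simp]: "nonneg (xs @ ys) \<longleftrightarrow> nonneg xs \<and> nonneg ys"
  unfolding nonneg_def by auto

lemma slot_nonneg:
  assumes "nonneg bs" "set blk \<subseteq> {..<length bs}"
  shows "0 \<le> slot bs blk j"
  using assms unfolding slot_def nonneg_def by (auto dest: nth_mem)

lemma price_nonneg:
  assumes "valid_block B bs blk" "nonneg bs"
  shows "0 \<le> price k bs blk"
  using assms slot_nonneg unfolding price_def valid_block_def by blast

lemma slot_antimono:
  assumes "valid_block B bs blk" "nonneg bs" "i \<le> j"
  shows "slot bs blk j \<le> slot bs blk i"
proof (cases "j < length blk")
  case True
  thus ?thesis using assms unfolding slot_def valid_block_def
    by (cases "i = j") (auto simp: sorted_wrt_iff_nth_less)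
next
  case False
  thus ?thesis using slot_nonneg[OF assms(2), of blk i] assms(1)
    unfolding slot_def valid_block_def by auto
qed

lemma price_le_top_bid:
  assumes "valid_block B bs blk" "nonneg bs" "i \<in> set (take k blk)"
  shows "price k bs blk \<le> bs ! i"
proof -
  obtain j where "j < k" "j < length blk" "i = blk ! j" using assms(3) by (auto simp: in_set_conv_nth)
  thus ?thesis using slot_antimono[OF assms(1,2), of j k] unfolding price_def slot_def by simp
qed

lemma bid_le_price_beyond_top:
  assumes "valid_block B bs blk" "nonneg bs" "k \<le> j" "j < length blk"
  shows "bs ! (blk ! j) \<le> price k bs blk"
  using slot_antimono[OF assms(1-3)] assms(4) unfolding price_def slot_def by simp

lemma honest_block_set_if_not_full:
  assumes "honest_block B bs blk" "length blk \<noteq> B"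
  shows "set blk = {..<length bs}"
proof -
  have "distinct blk" "set blk \<subseteq> {..<length bs}" "length blk = length bs"
    using assms unfolding honest_block_def valid_block_def by (auto simp: min_def split: if_splits)
  thus ?thesis by (metis card_lessThan card_subset_eq distinct_card finite_lessThan)
qed

lemma honest_block_excluded_le_slot:
  assumes "honest_block B bs blk" "i < length bs" "i \<notin> set blk" "j < B"
  shows "length blk = B" "bs ! i \<le> slot bs blk j"
proof -
  show L: "length blk = B" using honest_block_set_if_not_full[OF assms(1)] assms(2,3) by auto
  hence "blk ! j \<in> set blk" using assms(4) by simp
  thus "bs ! i \<le> slot bs blk j" using assms L unfolding honest_block_def slot_def by auto
qed

lemma honest_block_top_if_price_less:
  assumes H: "honest_block B bs blk" and "nonneg bs" "k < B"
    and "i < length bs" "price k bs blk < bs ! i"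
  shows "i \<in> set (take k blk)"
proof -
  have V: "valid_block B bs blk" using H unfolding honest_block_def by simp
  have "i \<in> set blk"
    using honest_block_excluded_le_slot[OF H] assms(3-5) unfolding price_def by force
  then obtain j where j: "j < length blk" "i = blk ! j" by (auto simp: in_set_conv_nth)
  have "j < k" using bid_le_price_beyond_top[OF V assms(2) _ j(1), of k] assms(5) j(2) by (metis not_le)
  thus ?thesis using j by (auto simp: in_set_conv_nth)
qed

lemma sum_antitone_le_initial_segment:
  fixes h :: "nat \<Rightarrow> 'a::ordered_comm_monoid_add"
  assumes antitone: "\<And>i j. i \<le> j \<Longrightarrow> h j \<le> h i" and "finite J"
  shows "(\<Sum>j\<in>J. h j) \<le> (\<Sum>j<card J. h j)"
  using assms(2)
proof (induction "card J" arbitrary: J)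
  case (Suc n)
  define M where "M = Max J"
  have "J \<noteq> {}" using Suc.hyps(2) by auto
  hence M: "M \<in> J" "card (J - {M}) = n" using Suc M_def by auto
  have "J \<subseteq> {..M}" using Max_ge[OF Suc.prems] M_def by auto
  hence "n \<le> M" using card_mono[of "{..M}" J] Suc.hyps(2) by simp
  have "(\<Sum>j\<in>J. h j) = h M + (\<Sum>j\<in>J - {M}. h j)"
    using Suc.prems M by (simp add: sum.remove)
  also have "\<dots> \<le> h n + (\<Sum>j<n. h j)"
    using add_mono[OF antitone[OF \<open>n \<le> M\<close>] Suc.hyps(1)[of "J - {M}"]] M Suc.prems by simp
  finally show ?case using Suc.hyps(2)[symmetric] by (simp add: add.commute)
qed simp

lemma sum_le_sum_if_card_eq:
  fixes f g :: "'a \<Rightarrow> 'b::ordered_comm_monoid_add"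
  assumes "finite X" "finite Y" "card X = card Y" "\<And>x y. x \<in> X \<Longrightarrow> y \<in> Y \<Longrightarrow> f x \<le> g y"
  shows "sum f X \<le> sum g Y"
proof -
  obtain h where h: "bij_betw h X Y" using finite_same_card_bij[OF assms(1-3)] by blast
  have "sum f X \<le> sum (g \<circ> h) X"
    using h assms(4) by (intro sum_mono) (auto simp: bij_betw_def)
  thus ?thesis using sum.reindex_bij_betw[OF h, of g] by simp
qed

text \<open>Used as the true-value profile: the indices beyond the honest bids are the fake bids,
  whose true value is 0.\<close>
definition padded_bid :: "real list \<Rightarrow> nat \<Rightarrow> real" where
  "padded_bid bs i = (if i < length bs then bs ! i else 0)"

text \<open>Bids in the honest block occupy their own slots; bids left out are dominated by every
  slot of the (then full) block, so they can be matched with arbitrary free slots.\<close>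
lemma honest_block_slots_dominate:
  fixes \<phi> :: "real \<Rightarrow> real"
  assumes H: "honest_block B bs blk" and nn: "nonneg bs" and mono: "mono \<phi>"
    and D: "finite D" "card D \<le> B"
  obtains J where "J \<subseteq> {..<B}" "card J = card D"
    "(\<Sum>i\<in>D. \<phi> (padded_bid bs i)) \<le> (\<Sum>j\<in>J. \<phi> (slot bs blk j))"
proof -
  have dist: "distinct blk" and sub: "set blk \<subseteq> {..<length bs}" and lB: "length blk \<le> B"
    using H unfolding honest_block_def valid_block_def by auto
  define J1 where "J1 = {j. j < length blk \<and> blk ! j \<in> D}"
  have bij: "bij_betw ((!) blk) J1 (D \<inter> set blk)"
    using dist unfolding bij_betw_def J1_def inj_on_def
    by (auto simp: nth_eq_iff_index_eq in_set_conv_nth)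
  have J1: "finite J1" "J1 \<subseteq> {..<B}" using lB unfolding J1_def by auto
  have cD: "card D = card (D \<inter> set blk) + card (D - set blk)"
    using D(1) by (metis Int_Diff_Un Int_Diff_disjoint card_Un_disjoint finite_Diff finite_Int)
  have "card (D - set blk) \<le> card ({..<B} - J1)"
    using cD D(2) J1 bij_betw_same_card[OF bij] by (simp add: card_Diff_subset)
  then obtain J2 where J2: "J2 \<subseteq> {..<B} - J1" "card J2 = card (D - set blk)" "finite J2"
    by (rule obtain_subset_with_card_n)
  have disj: "J1 \<inter> J2 = {}" using J2(1) by blast
  have s1: "(\<Sum>i\<in>D \<inter> set blk. \<phi> (padded_bid bs i)) = (\<Sum>j\<in>J1. \<phi> (slot bs blk j))"
    using sub unfolding sum.reindex_bij_betw[OF bij, symmetric]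
    by (intro sum.cong) (auto simp: J1_def padded_bid_def slot_def dest!: nth_mem)
  have s2: "(\<Sum>i\<in>D - set blk. \<phi> (padded_bid bs i)) \<le> (\<Sum>j\<in>J2. \<phi> (slot bs blk j))"
  proof (rule sum_le_sum_if_card_eq)
    fix i j assume "i \<in> D - set blk" "j \<in> J2"
    hence "padded_bid bs i \<le> slot bs blk j"
      using honest_block_excluded_le_slot(2)[OF H] slot_nonneg[OF nn sub] J2(1)
      unfolding padded_bid_def by auto
    thus "\<phi> (padded_bid bs i) \<le> \<phi> (slot bs blk j)" using mono by (simp add: monoD)
  qed (use D(1) J2 in auto)
  have "(\<Sum>i\<in>D. \<phi> (padded_bid bs i))
      = (\<Sum>i\<in>D \<inter> set blk. \<phi> (padded_bid bs i)) + (\<Sum>i\<in>D - set blk. \<phi> (padded_bid bs i))"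
    using D(1) by (metis sum.Int_Diff)
  also have "\<dots> \<le> (\<Sum>j\<in>J1 \<union> J2. \<phi> (slot bs blk j))"
    using s1 s2 J1(1) J2(3) disj by (simp add: sum.union_disjoint)
  finally have "(\<Sum>i\<in>D. \<phi> (padded_bid bs i)) \<le> (\<Sum>j\<in>J1 \<union> J2. \<phi> (slot bs blk j))" .
  moreover have "J1 \<union> J2 \<subseteq> {..<B}" using J1 J2 by blast
  moreover have "card (J1 \<union> J2) = card D"
    using J1 J2 disj cD bij_betw_same_card[OF bij] by (simp add: card_Un_disjoint)
  ultimately show ?thesis using that by blast
qed

lemma honest_block_top_slots_dominate:
  fixes \<phi> :: "real \<Rightarrow> real"
  assumes H: "honest_block B bs blk" and nn: "nonneg bs" and mono: "mono \<phi>"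
    and D: "finite D" "card D \<le> B"
  shows "(\<Sum>i\<in>D. \<phi> (padded_bid bs i)) \<le> (\<Sum>j<card D. \<phi> (slot bs blk j))"
proof -
  obtain J where J: "J \<subseteq> {..<B}" "card J = card D"
    and le: "(\<Sum>i\<in>D. \<phi> (padded_bid bs i)) \<le> (\<Sum>j\<in>J. \<phi> (slot bs blk j))"
    using honest_block_slots_dominate[OF assms] .
  have V: "valid_block B bs blk" using H unfolding honest_block_def by simp
  have "(\<Sum>j\<in>J. \<phi> (slot bs blk j)) \<le> (\<Sum>j<card J. \<phi> (slot bs blk j))"
    using slot_antimono[OF V nn] mono finite_subset[OF J(1)]
    by (intro sum_antitone_le_initial_segment) (auto simp: monoD)
  thus ?thesis using le J(2) by simp
qed

section \<open>Expected utility of a single transaction\<close>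

lemma overbid_penalty_nonpos: "0 \<le> \<gamma> \<Longrightarrow> overbid_penalty \<gamma> v b \<le> 0"
  unfolding overbid_penalty_def by simp

lemma overbid_penalty_truthful [simp]: "overbid_penalty \<gamma> v v = 0"
  unfolding overbid_penalty_def by simp

text \<open>The penalty for a bid b \<le> p that is not confirmed is offset by the revenue \<gamma> b it yields.\<close>
lemma overbid_penalty_add_le:
  assumes "0 \<le> \<gamma>" "b \<le> p"
  shows "overbid_penalty \<gamma> v b + \<gamma> * b \<le> \<gamma> * min v p"
  using assms unfolding overbid_penalty_def by (auto simp: algebra_simps min_def mult_left_mono)

lemma expected_tx_util_le:
  assumes "0 \<le> \<gamma>" "r \<le> 1"
  shows "expected_tx_util \<gamma> r in_top v b p \<le> (if in_top then r * (v - p) else 0)"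
  using assms overbid_penalty_nonpos[of \<gamma> v b] mult_left_mono[of _ 0 "1 - r"]
  unfolding expected_tx_util_def by (auto simp: mult_nonneg_nonpos)

text \<open>For a transaction in the top k the overbidding penalty is \<gamma>-strict: a bid above the value
  costs at least \<gamma> (p - v) whether or not it is confirmed.\<close>
lemma expected_tx_util_top_le:
  assumes "0 < \<gamma>" "\<gamma> \<le> 1" "0 \<le> r" "r \<le> 1" "p \<le> b"
  shows "expected_tx_util \<gamma> r True v b p \<le> r * max (v - p) 0 + \<gamma> * (min v p - p)"
proof (cases "p \<le> v")
  case True
  have "expected_tx_util \<gamma> r True v b p \<le> r * (v - p)"
    using expected_tx_util_le[of \<gamma> r True v b p] assms by simp
  also have "\<dots> = r * max (v - p) 0 + \<gamma> * (min v p - p)" using True by simp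
  finally show ?thesis .
next
  case False
  have "(1 - r) * (- \<gamma> * (b - v)) \<le> (1 - r) * (- \<gamma> * (p - v))"
    using assms by (intro mult_left_mono[of _ _ "1 - r"]) auto
  moreover have "0 \<le> r * (1 - \<gamma>) * (p - v)" using assms False by simp
  ultimately show ?thesis
    using False assms unfolding expected_tx_util_def overbid_penalty_def by (simp add: algebra_simps)
qed

lemma exp_util_truthful:
  assumes H: "honest_block B bs blk" and nn: "nonneg bs" and "k < B"
    and C: "C \<subseteq> {..<length bs}" "finite C" and truthful: "\<And>i. i \<in> C \<Longrightarrow> val i = bs ! i"
    and m: "1 \<le> n_conf c \<gamma> k" "n_conf c \<gamma> k \<le> k"
  shows "exp_util c \<gamma> k k' bs blk C val mi = (if mi then miner_rev \<gamma> k k' bs blk else 0)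
     + (\<Sum>i\<in>C. real (n_conf c \<gamma> k) / real k * max (bs ! i - price k bs blk) 0)"
proof -
  have V: "valid_block B bs blk" using H unfolding honest_block_def by simp
  have "expected_tx_util \<gamma> (real (n_conf c \<gamma> k) / real k) (i \<in> set (take k blk)) (val i) (bs ! i)
      (price k bs blk) = real (n_conf c \<gamma> k) / real k * max (bs ! i - price k bs blk) 0" if "i \<in> C" for i
  proof (cases "i \<in> set (take k blk)")
    case True
    thus ?thesis using price_le_top_bid[OF V nn True] truthful[OF that]
      unfolding expected_tx_util_def by simp
  next
    case False
    hence "bs ! i \<le> price k bs blk"
      using honest_block_top_if_price_less[OF H nn \<open>k < B\<close>, of i] C(1) that by force
    thus ?thesis using False truthful[OF that] unfolding expected_tx_util_def by simp
  qed
  moreover have "distinct blk" using V unfolding valid_block_def by simp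
  ultimately show ?thesis using exp_util_eq_sum[OF _ C(2) m] by simp
qed

section \<open>Side-contract proofness\<close>

definition revenue_set :: "nat \<Rightarrow> nat \<Rightarrow> nat list \<Rightarrow> nat set" where
  "revenue_set k k' blk = (!) blk ` ({k..<k + k'} \<inter> {..<length blk})"

lemma miner_rev_eq_sum_revenue_set:
  assumes "distinct blk"
  shows "miner_rev \<gamma> k k' bs blk = \<gamma> * (\<Sum>i\<in>revenue_set k k' blk. bs ! i)"
proof -
  have "(\<Sum>j\<in>{k..<k+k'}. slot bs blk j) = (\<Sum>j\<in>{k..<k+k'} \<inter> {..<length blk}. bs ! (blk ! j))"
    unfolding slot_def
    using sum.inter_restrict[of "{k..<k+k'}" "\<lambda>j. bs ! (blk ! j)" "{..<length blk}"] by simp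
  also have "\<dots> = (\<Sum>i\<in>revenue_set k k' blk. bs ! i)"
    unfolding revenue_set_def using assms
    by (subst sum.reindex) (auto simp: inj_on_def nth_eq_iff_index_eq)
  finally show ?thesis unfolding miner_rev_def by simp
qed

lemma top_inter_revenue_set:
  assumes "distinct blk"
  shows "set (take k blk) \<inter> revenue_set k k' blk = {}"
  using assms unfolding revenue_set_def
  by (auto simp: in_set_conv_nth nth_eq_iff_index_eq)

lemma finite_revenue_set: "finite (revenue_set k k' blk)"
  unfolding revenue_set_def by simp

lemma card_revenue_set_le: "card (revenue_set k k' blk) \<le> k'"
  unfolding revenue_set_def
  by (rule order.trans[OF card_image_le]) (auto intro: order.trans[OF card_mono[of "{k..<k+k'}"]])

text \<open>Pointwise accounting of the deviation: a top-k coalition transaction earns at most its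
  truthful gain plus \<gamma> (min u p - p), a coalition transaction in a revenue slot is worth at
  most \<gamma> min u p, and non-coalition transactions contribute exactly these amounts.\<close>
lemma sum_expected_tx_util_add_miner_rev_le:
  fixes u :: "nat \<Rightarrow> real" and k k' :: nat and bs :: "real list" and blk :: "nat list"
  defines "Top \<equiv> set (take k blk)" and "R \<equiv> revenue_set k k' blk" and "p \<equiv> price k bs blk"
  assumes V: "valid_block B bs blk" and nn: "nonneg bs" and P: "finite P"
    and uP: "\<And>i. i \<in> P \<Longrightarrow> val i = u i" and uO: "\<And>i. i \<in> set blk \<Longrightarrow> i \<notin> P \<Longrightarrow> bs ! i = u i"
    and \<gamma>: "0 < \<gamma>" "\<gamma> \<le> 1" and r: "0 \<le> r" "r \<le> 1"
  shows "(\<Sum>i\<in>P. expected_tx_util \<gamma> r (i \<in> Top) (val i) (bs ! i) p) + miner_rev \<gamma> k k' bs blk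
     \<le> (\<Sum>i\<in>P \<inter> Top. r * max (u i - p) 0) + \<gamma> * (\<Sum>i\<in>Top. min (u i) p - p)
        + \<gamma> * (\<Sum>i\<in>R. min (u i) p)"
proof -
  define t where "t i = expected_tx_util \<gamma> r (i \<in> Top) (val i) (bs ! i) p" for i
  have dist: "distinct blk" using V unfolding valid_block_def by simp
  have TR: "Top \<inter> R = {}" unfolding Top_def R_def using top_inter_revenue_set[OF dist] .
  have top: "p \<le> bs ! i" "i \<in> set blk" if "i \<in> Top" for i
    using that price_le_top_bid[OF V nn] unfolding Top_def p_def by (auto dest: in_set_takeD)
  have rev: "bs ! i \<le> p" "i \<in> set blk" if "i \<in> R" for i
    using that bid_le_price_beyond_top[OF V nn] unfolding R_def revenue_set_def p_def by auto
  define U where "U = P \<union> Top \<union> R"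
  define Lf where "Lf i = (if i \<in> P then t i else 0) + (if i \<in> R then \<gamma> * bs ! i else 0)" for i
  define Rf where "Rf i = (if i \<in> P \<inter> Top then r * max (u i - p) 0 else 0)
      + (if i \<in> Top then \<gamma> * (min (u i) p - p) else 0) + (if i \<in> R then \<gamma> * min (u i) p else 0)" for i
  have "Lf i \<le> Rf i" for i
  proof -
    consider "i \<in> P" "i \<in> Top" | "i \<in> P" "i \<in> R" | "i \<in> P" "i \<notin> Top" "i \<notin> R"
      | "i \<notin> P" "i \<in> Top" | "i \<notin> P" "i \<in> R" | "i \<notin> P" "i \<notin> Top" "i \<notin> R" by blast
    thus ?thesis
    proof cases
      case 1
      thus ?thesis using TR expected_tx_util_top_le[OF \<gamma> r top(1)[OF 1(2)], of "u i"] uP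
        unfolding Lf_def Rf_def t_def by auto
    next
      case 2
      thus ?thesis using TR overbid_penalty_add_le[OF _ rev(1)[OF 2(2)], of \<gamma> "u i"] \<gamma> uP
        unfolding Lf_def Rf_def t_def expected_tx_util_def by auto
    next
      case 3
      thus ?thesis using overbid_penalty_nonpos[of \<gamma>] \<gamma>
        unfolding Lf_def Rf_def t_def expected_tx_util_def by auto
    next
      case 4
      thus ?thesis using TR top[OF 4(2)] uO unfolding Lf_def Rf_def by auto
    next
      case 5
      thus ?thesis using TR rev[OF 5(2)] uO unfolding Lf_def Rf_def by (auto simp: min_def)
    qed (simp add: Lf_def Rf_def)
  qed
  hence "(\<Sum>i\<in>U. Lf i) \<le> (\<Sum>i\<in>U. Rf i)" by (rule sum_mono)
  moreover have "finite U" unfolding U_def Top_def R_def using P finite_revenue_set by auto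
  hence restrict: "(\<Sum>i\<in>U. if i \<in> A then f i else 0) = sum f A" if "A \<subseteq> U" for A and f :: "nat \<Rightarrow> real"
    using that sum.inter_restrict[of U f A] by (simp add: Int_absorb1)
  have "P \<subseteq> U" "Top \<subseteq> U" "R \<subseteq> U" "P \<inter> Top \<subseteq> U" unfolding U_def by auto
  ultimately show ?thesis
    unfolding Lf_def Rf_def sum.distrib miner_rev_eq_sum_revenue_set[OF dist] t_def R_def[symmetric]
      restrict[OF \<open>P \<subseteq> U\<close>] restrict[OF \<open>Top \<subseteq> U\<close>] restrict[OF \<open>R \<subseteq> U\<close>]
      restrict[OF \<open>P \<inter> Top \<subseteq> U\<close>]
    by (simp add: sum_distrib_left)
qed

lemma sum_min_top_revenue_le_honest_slots:
  assumes H: "honest_block B hb hblk" and nn: "nonneg hb" and "k + k' \<le> B"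
    and dist: "distinct blk" and "0 \<le> p"
  shows "(\<Sum>i\<in>set (take k blk). min (padded_bid hb i) p - p)
      + (\<Sum>i\<in>revenue_set k k' blk. min (padded_bid hb i) p)
    \<le> (\<Sum>j\<in>{k..<k+k'}. min (slot hb hblk j) p)"
proof -
  define T where "T = set (take k blk)"
  define R where "R = revenue_set k k' blk"
  have hsub: "set hblk \<subseteq> {..<length hb}" using H unfolding honest_block_def valid_block_def by auto
  have slot_min: "0 \<le> min (slot hb hblk j) p" for j using slot_nonneg[OF nn hsub] \<open>0 \<le> p\<close> by simp
  show ?thesis
  proof (cases "length blk \<le> k")
    case True
    hence "R = {}" unfolding R_def revenue_set_def by auto
    moreover have "(\<Sum>i\<in>T. min (padded_bid hb i) p - p) \<le> 0" by (intro sum_nonpos) simp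
    moreover have "0 \<le> (\<Sum>j\<in>{k..<k+k'}. min (slot hb hblk j) p)" by (intro sum_nonneg slot_min)
    ultimately show ?thesis unfolding T_def R_def by simp
  next
    case False
    have cT: "card T = k" unfolding T_def using False dist by (simp add: distinct_card)
    have TR: "finite (T \<union> R)" "card (T \<union> R) \<le> k + k'"
      using card_Un_le[of T R] cT card_revenue_set_le[of k k' blk] finite_revenue_set
      unfolding T_def R_def by auto
    have "(\<Sum>i\<in>T \<union> R. min (padded_bid hb i) p) \<le> (\<Sum>j<card (T \<union> R). min (slot hb hblk j) p)"
    proof (rule honest_block_top_slots_dominate[OF H nn _ TR(1)])
      show "mono (\<lambda>x. min x p)" by (auto simp: mono_def)
    qed (use TR(2) \<open>k + k' \<le> B\<close> in simp)
    also have "\<dots> \<le> (\<Sum>j<k+k'. min (slot hb hblk j) p)"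
      using TR(2) slot_min by (intro sum_mono2) auto
    also have "\<dots> = (\<Sum>j<k. min (slot hb hblk j) p) + (\<Sum>j\<in>{k..<k+k'}. min (slot hb hblk j) p)"
      by (simp add: sum.atLeastLessThan_concat[symmetric] lessThan_atLeast0)
    also have "(\<Sum>j<k. min (slot hb hblk j) p) \<le> real k * p"
      using sum_bounded_above[of "{..<k}" "\<lambda>j. min (slot hb hblk j) p" p] by simp
    moreover have "(\<Sum>i\<in>T \<union> R. min (padded_bid hb i) p)
        = (\<Sum>i\<in>T. min (padded_bid hb i) p) + (\<Sum>i\<in>R. min (padded_bid hb i) p)"
      using top_inter_revenue_set[OF dist] finite_revenue_set unfolding T_def R_def
      by (intro sum.union_disjoint) auto
    ultimately show ?thesis unfolding T_def[symmetric] R_def[symmetric] by (simp add: sum_subtractf cT)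
  qed
qed

lemma sum_gain_price_drop_le:
  fixes v :: "'a \<Rightarrow> real"
  assumes "finite C" "0 \<le> r" "real (card C) * r \<le> \<gamma>"
  shows "(\<Sum>i\<in>C. r * max (v i - p') 0) \<le> (\<Sum>i\<in>C. r * max (v i - p) 0) + \<gamma> * max (p - p') 0"
proof -
  have "(\<Sum>i\<in>C. r * max (v i - p') 0) \<le> (\<Sum>i\<in>C. r * max (v i - p) 0 + r * max (p - p') 0)"
    using \<open>0 \<le> r\<close> by (intro sum_mono) (auto simp: mult_left_mono simp flip: distrib_left)
  also have "\<dots> = (\<Sum>i\<in>C. r * max (v i - p) 0) + real (card C) * r * max (p - p') 0"
    by (simp add: sum.distrib)
  also have "real (card C) * r * max (p - p') 0 \<le> \<gamma> * max (p - p') 0"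
    using assms(3) by (intro mult_right_mono) auto
  finally show ?thesis by simp
qed

lemma sum_min_add_excess_le:
  fixes s :: "nat \<Rightarrow> real"
  assumes "1 \<le> k'"
  shows "(\<Sum>j\<in>{k..<k+k'}. min (s j) q) + max (s k - q) 0 \<le> (\<Sum>j\<in>{k..<k+k'}. s j)"
proof -
  have "(\<Sum>j\<in>{Suc k..<k+k'}. min (s j) q) \<le> (\<Sum>j\<in>{Suc k..<k+k'}. s j)" by (intro sum_mono) simp
  moreover have "min (s k) q + max (s k - q) 0 = s k" by auto
  ultimately show ?thesis using assms by (simp add: sum.atLeast_Suc_lessThan)
qed

lemma coal_idx_values:
  assumes "i \<in> coal_idx others (length vs)"
  shows "coal_val others vs i = (others @ vs) ! i" "padded_bid (others @ vs) i = (others @ vs) ! i"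
  using assms unfolding coal_idx_def coal_val_def padded_bid_def by (auto simp: nth_append)

lemma fake_idx_values:
  assumes "i \<in> fake_idx others (length vs) fakes"
  shows "coal_val others vs i = 0" "padded_bid (others @ vs) i = 0"
  using assms unfolding fake_idx_def coal_val_def padded_bid_def by auto

lemma nth_outside_coalition:
  assumes "length ws = length vs" "i < length (others @ ws @ fakes)"
    and "i \<notin> coal_idx others (length vs) \<union> fake_idx others (length vs) fakes"
  shows "(others @ ws @ fakes) ! i = padded_bid (others @ vs) i"
  using assms unfolding coal_idx_def fake_idx_def padded_bid_def by (auto simp: nth_append)

lemma exp_util_deviation_le:
  assumes \<gamma>: "0 < \<gamma>" "\<gamma> \<le> 1" and "k + k' \<le> B"
    and m: "1 \<le> n_conf c \<gamma> k" "n_conf c \<gamma> k \<le> k" and lws: "length ws = length vs"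
    and nn: "nonneg others" "nonneg vs" "nonneg ws" "nonneg fakes"
    and H: "honest_block B (others @ vs) blk"
    and V: "valid_block B (others @ ws @ fakes) blk'"
  shows "exp_util c \<gamma> k k' (others @ ws @ fakes) blk'
            (coal_idx others (length vs) \<union> fake_idx others (length vs) fakes) (coal_val others vs) True
    \<le> (\<Sum>i\<in>coal_idx others (length vs).
          real (n_conf c \<gamma> k) / real k * max ((others @ vs) ! i - price k (others @ ws @ fakes) blk') 0)
      + \<gamma> * (\<Sum>j\<in>{k..<k+k'}. min (slot (others @ vs) blk j) (price k (others @ ws @ fakes) blk'))"
proof -
  define r where "r = real (n_conf c \<gamma> k) / real k"
  define hb where "hb = others @ vs"
  define bs where "bs = others @ ws @ fakes"
  define C where "C = coal_idx others (length vs)"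
  define F where "F = fake_idx others (length vs) fakes"
  define p' where "p' = price k bs blk'"
  define u where "u = padded_bid hb"
  define g where "g i = r * max (u i - p') 0" for i
  have r: "0 \<le> r" "r \<le> 1" using m unfolding r_def by auto
  have fin: "finite C" "finite F" "C \<inter> F = {}" unfolding C_def F_def coal_idx_def fake_idx_def by auto
  have dist': "distinct blk'" and sub': "set blk' \<subseteq> {..<length bs}"
    using V unfolding valid_block_def bs_def by auto
  have "p' \<ge> 0" using price_nonneg V nn unfolding p'_def bs_def by simp
  have uP: "coal_val others vs i = u i" if "i \<in> C \<union> F" for i
    using that coal_idx_values fake_idx_values unfolding u_def C_def F_def hb_def by auto
  have uO: "bs ! i = u i" if "i \<in> set blk'" "i \<notin> C \<union> F" for i
    using that sub' nth_outside_coalition[OF lws] unfolding u_def C_def F_def hb_def bs_def by auto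
  have "exp_util c \<gamma> k k' bs blk' (C \<union> F) (coal_val others vs) True
      = (\<Sum>i\<in>C \<union> F. expected_tx_util \<gamma> r (i \<in> set (take k blk')) (coal_val others vs i) (bs ! i) p')
        + miner_rev \<gamma> k k' bs blk'"
    using exp_util_eq_sum[OF dist' _ m] fin unfolding r_def p'_def by simp
  also have "\<dots> \<le> (\<Sum>i\<in>(C \<union> F) \<inter> set (take k blk'). g i) + \<gamma> * (\<Sum>i\<in>set (take k blk'). min (u i) p' - p')
        + \<gamma> * (\<Sum>i\<in>revenue_set k k' blk'. min (u i) p')"
  proof -
    have "nonneg bs" "finite (C \<union> F)" using nn fin unfolding bs_def by auto
    from sum_expected_tx_util_add_miner_rev_le[OF V[folded bs_def] this uP uO \<gamma> r, of k k']
    show ?thesis unfolding g_def p'_def by simp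
  qed
  also have "(\<Sum>i\<in>(C \<union> F) \<inter> set (take k blk'). g i) \<le> (\<Sum>i\<in>C. g i)"
  proof -
    have "g i = 0" if "i \<in> F" for i
      using that fake_idx_values \<open>p' \<ge> 0\<close> unfolding g_def u_def F_def hb_def by simp
    hence "(\<Sum>i\<in>C \<union> F. g i) = (\<Sum>i\<in>C. g i)" using fin by (simp add: sum.union_disjoint)
    moreover have "(\<Sum>i\<in>(C \<union> F) \<inter> set (take k blk'). g i) \<le> (\<Sum>i\<in>C \<union> F. g i)"
      using fin r by (intro sum_mono2) (auto simp: g_def)
    ultimately show ?thesis by simp
  qed
  finally have "exp_util c \<gamma> k k' bs blk' (C \<union> F) (coal_val others vs) True
     \<le> (\<Sum>i\<in>C. g i) + (\<gamma> * (\<Sum>i\<in>set (take k blk'). min (u i) p' - p')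
        + \<gamma> * (\<Sum>i\<in>revenue_set k k' blk'. min (u i) p'))"
    by simp
  also have "\<gamma> * (\<Sum>i\<in>set (take k blk'). min (u i) p' - p') + \<gamma> * (\<Sum>i\<in>revenue_set k k' blk'. min (u i) p')
      \<le> \<gamma> * (\<Sum>j\<in>{k..<k+k'}. min (slot hb blk j) p')"
    using sum_min_top_revenue_le_honest_slots[OF H[folded hb_def] _ \<open>k + k' \<le> B\<close> dist' \<open>p' \<ge> 0\<close>] nn \<gamma>
    unfolding u_def hb_def by (simp flip: distrib_left)
  finally show ?thesis
    using coal_idx_values(2) unfolding g_def u_def r_def C_def F_def hb_def bs_def p'_def by simp
qed

text \<open>Since m c \<le> \<gamma> k, a coalition of n \<le> c users gains at most n (m/k) (p - p') \<le> \<gamma> (p - p')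
  from lowering the price from p to p', while the miner loses at least \<gamma> (p - p') of revenue on
  slot k + 1.\<close>
lemma exp_util_coalition_le:
  assumes c: "1 \<le> c" and \<gamma>: "0 < \<gamma>" "\<gamma> \<le> 1" and "1 \<le> k'" "k + k' \<le> B"
    and m: "1 \<le> n_conf c \<gamma> k"
    and "length vs \<le> c" and lws: "length ws = length vs"
    and nn: "nonneg others" "nonneg vs" "nonneg ws" "nonneg fakes"
    and H: "honest_block B (others @ vs) blk"
    and V: "valid_block B (others @ ws @ fakes) blk'"
  shows "exp_util c \<gamma> k k' (others @ ws @ fakes) blk'
            (coal_idx others (length vs) \<union> fake_idx others (length vs) fakes) (coal_val others vs) True
          \<le> exp_util c \<gamma> k k' (others @ vs) blk (coal_idx others (length vs)) (coal_val others vs) True"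
proof -
  define r where "r = real (n_conf c \<gamma> k) / real k"
  define hb where "hb = others @ vs"
  define C where "C = coal_idx others (length vs)"
  define p where "p = price k hb blk"
  define p' where "p' = price k (others @ ws @ fakes) blk'"
  have mk: "n_conf c \<gamma> k \<le> k" and mc: "real (n_conf c \<gamma> k) * real c \<le> \<gamma> * real k"
    using n_conf_le[OF c] \<gamma> by auto
  have "0 < real k" using m mk by simp
  have r: "0 \<le> r" "real (card C) * r \<le> \<gamma>"
  proof -
    have "real (card C) * real (n_conf c \<gamma> k) \<le> real c * real (n_conf c \<gamma> k)"
      using \<open>length vs \<le> c\<close> unfolding C_def coal_idx_def by (intro mult_right_mono) auto
    thus "real (card C) * r \<le> \<gamma>"
      using mc \<open>0 < real k\<close> unfolding r_def by (simp add: field_simps)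
  qed (simp add: r_def)
  have "finite C" unfolding C_def coal_idx_def by simp
  have deviation: "exp_util c \<gamma> k k' (others @ ws @ fakes) blk' (C \<union> fake_idx others (length vs) fakes)
      (coal_val others vs) True
    \<le> (\<Sum>i\<in>C. r * max (hb ! i - p') 0) + \<gamma> * (\<Sum>j\<in>{k..<k+k'}. min (slot hb blk j) p')"
    using exp_util_deviation_le[OF \<gamma> \<open>k + k' \<le> B\<close> m mk lws nn H V]
    unfolding r_def C_def hb_def p'_def .
  have gain: "(\<Sum>i\<in>C. r * max (hb ! i - p') 0) \<le> (\<Sum>i\<in>C. r * max (hb ! i - p) 0) + \<gamma> * max (p - p') 0"
    using sum_gain_price_drop_le[OF \<open>finite C\<close> r] .
  have loss: "\<gamma> * max (p - p') 0 + \<gamma> * (\<Sum>j\<in>{k..<k+k'}. min (slot hb blk j) p')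
      \<le> \<gamma> * (\<Sum>j\<in>{k..<k+k'}. slot hb blk j)"
    using sum_min_add_excess_le[OF \<open>1 \<le> k'\<close>, where s = "slot hb blk" and k = k and q = p'] \<gamma>
    unfolding p_def price_def by (simp flip: distrib_left add: add.commute)
  have truthful: "exp_util c \<gamma> k k' hb blk C (coal_val others vs) True
      = \<gamma> * (\<Sum>j\<in>{k..<k+k'}. slot hb blk j) + (\<Sum>i\<in>C. r * max (hb ! i - p) 0)"
  proof -
    have "nonneg hb" "k < B" "C \<subseteq> {..<length hb}"
      using nn \<open>1 \<le> k'\<close> \<open>k + k' \<le> B\<close> unfolding hb_def C_def coal_idx_def by auto
    from exp_util_truthful[OF H[folded hb_def] this \<open>finite C\<close> _ m mk] coal_idx_values(1)
    show ?thesis unfolding r_def p_def miner_rev_def C_def hb_def by simp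
  qed
  show ?thesis
    using deviation gain loss truthful unfolding C_def hb_def by linarith
qed

section \<open>User incentive compatibility\<close>

text \<open>If p' < p, the k bids other than the user's among the top k + 1 honest slots all exceed p'
  and are unchanged by the deviation, so together with the user's bid they would need k + 1 of
  the k top slots.\<close>
lemma price_le_if_deviator_on_top:
  assumes H: "honest_block B (others @ [v]) blk" and H': "honest_block B (others @ [b] @ fakes) blk'"
    and nn: "nonneg others" "0 \<le> v" "0 \<le> b" "nonneg fakes" and "k < B"
    and top: "length others \<in> set (take k blk')"
  shows "price k (others @ [v]) blk \<le> price k (others @ [b] @ fakes) blk'"
proof (rule ccontr)
  define hb where "hb = others @ [v]"
  define bs where "bs = others @ [b] @ fakes"
  define lo where "lo = length others"
  assume "\<not> ?thesis"
  hence lt: "price k bs blk' < price k hb blk" unfolding hb_def bs_def by simp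
  have nnh: "nonneg hb" and nnb: "nonneg bs" using nn unfolding hb_def bs_def nonneg_def by auto
  have V: "valid_block B hb blk" and V': "valid_block B bs blk'"
    using H H' unfolding honest_block_def hb_def bs_def by auto
  have dist: "distinct blk" and sub: "set blk \<subseteq> {..<length hb}" using V unfolding valid_block_def by auto
  have "k < length blk"
    using lt price_nonneg[OF V' nnb, of k] unfolding price_def slot_def by (auto split: if_splits)
  define X where "X = set (take (Suc k) blk) - {lo}"
  have "card (set (take (Suc k) blk)) = Suc k" using \<open>k < length blk\<close> dist by (simp add: distinct_card)
  hence "k \<le> card X" unfolding X_def by (simp add: card_Diff_singleton_if)
  have "X \<subseteq> set (take k blk')"
  proof
    fix i assume "i \<in> X"
    then obtain j where j: "j < Suc k" "j < length blk" "i = blk ! j" "i \<noteq> lo"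
      unfolding X_def by (auto simp: in_set_conv_nth)
    hence "i < lo" using sub nth_mem unfolding hb_def lo_def by fastforce
    have "price k hb blk \<le> hb ! i"
      using slot_antimono[OF V nnh, of j k] j unfolding price_def slot_def by simp
    moreover have "hb ! i = bs ! i" "i < length bs"
      using \<open>i < lo\<close> unfolding hb_def bs_def lo_def by (auto simp: nth_append)
    ultimately show "i \<in> set (take k blk')"
      using honest_block_top_if_price_less[OF H'[folded bs_def] nnb \<open>k < B\<close>] lt by simp
  qed
  hence "card (insert lo X) \<le> card (set (take k blk'))"
    using top unfolding lo_def by (intro card_mono) auto
  also have "\<dots> \<le> k" using card_length[of "take k blk'"] by simp
  moreover have "finite X" "lo \<notin> X" unfolding X_def by auto
  ultimately show False using \<open>k \<le> card X\<close> by simp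
qed

lemma exp_util_user_le:
  assumes \<gamma>: "0 \<le> \<gamma>" and "k < B"
    and m: "1 \<le> n_conf c \<gamma> k" "n_conf c \<gamma> k \<le> k"
    and nn: "nonneg others" "0 \<le> v" "0 \<le> b" "nonneg fakes"
    and H: "honest_block B (others @ [v]) blk" and H': "honest_block B (others @ [b] @ fakes) blk'"
  shows "exp_util c \<gamma> k k' (others @ [b] @ fakes) blk'
            (coal_idx others 1 \<union> fake_idx others 1 fakes) (coal_val others [v]) False
          \<le> exp_util c \<gamma> k k' (others @ [v]) blk (coal_idx others 1) (coal_val others [v]) False"
proof -
  define r where "r = real (n_conf c \<gamma> k) / real k"
  define hb where "hb = others @ [v]"
  define bs where "bs = others @ [b] @ fakes"
  define lo where "lo = length others"
  define F where "F = fake_idx others 1 fakes"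
  define val where "val = coal_val others [v]"
  define p where "p = price k hb blk"
  define p' where "p' = price k bs blk'"
  define Top where "Top = set (take k blk')"
  define h where "h i = (if i \<in> Top then r * (val i - p') else 0)" for i
  have r: "0 \<le> r" "r \<le> 1" using m unfolding r_def by auto
  have C: "coal_idx others 1 = {lo}" unfolding coal_idx_def lo_def by auto
  have fin: "finite F" "lo \<notin> F" unfolding F_def fake_idx_def lo_def by auto
  have V': "valid_block B bs blk'" using H' unfolding honest_block_def bs_def by simp
  have "nonneg bs" using nn unfolding bs_def nonneg_def by auto
  have "exp_util c \<gamma> k k' hb blk {lo} val False = r * max (v - p) 0"
  proof -
    have "nonneg hb" "{lo} \<subseteq> {..<length hb}" "val lo = hb ! lo"
      using nn unfolding hb_def lo_def val_def coal_val_def nonneg_def by auto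
    from exp_util_truthful[OF H[folded hb_def] this(1) \<open>k < B\<close> this(2) _ _ m] this(3)
    show ?thesis unfolding r_def p_def hb_def lo_def by simp
  qed
  moreover have "exp_util c \<gamma> k k' bs blk' (insert lo F) val False
      = (\<Sum>i\<in>insert lo F. expected_tx_util \<gamma> r (i \<in> Top) (val i) (bs ! i) p')"
    using exp_util_eq_sum[of blk' "insert lo F" c \<gamma> k k' bs val False] V' fin m
    unfolding valid_block_def r_def p'_def Top_def by simp
  moreover have "\<dots> \<le> (\<Sum>i\<in>insert lo F. h i)"
    unfolding h_def by (intro sum_mono expected_tx_util_le[OF \<gamma> r(2)])
  moreover have "(\<Sum>i\<in>insert lo F. h i) \<le> (if lo \<in> Top then r * (v - p') else 0)"
  proof -
    have "h i \<le> 0" if "i \<in> F" for i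
      using that price_nonneg[OF V' \<open>nonneg bs\<close>] r(1) fake_idx_values[of i others "[v]" fakes]
      unfolding h_def val_def p'_def F_def by simp
    hence "(\<Sum>i\<in>F. h i) \<le> 0" by (rule sum_nonpos)
    thus ?thesis using fin unfolding h_def val_def coal_val_def lo_def by simp
  qed
  moreover have "(if lo \<in> Top then r * (v - p') else 0) \<le> r * max (v - p) 0"
    using price_le_if_deviator_on_top[OF H H' nn \<open>k < B\<close>] r(1)
    unfolding Top_def lo_def p_def p'_def hb_def bs_def by (auto intro: mult_left_mono)
  ultimately show ?thesis
    unfolding C hb_def bs_def val_def F_def insert_is_Un[symmetric] by linarith
qed

section \<open>The three incentive properties\<close>

lemma bspa_scp:
  assumes "1 \<le> c" "0 < \<gamma>" "\<gamma> \<le> 1" "1 \<le> k" "1 \<le> k'" "k + k' = B" "k' \<le> n_conf c \<gamma> k"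
  shows "BSPA_SCP B c \<gamma> k k'"
proof -
  have "k + k' \<le> B" using assms(6) by simp
  from exp_util_coalition_le[OF assms(1-3,5) this n_conf_range(1)[OF assms(1-3,5,7)]]
  show ?thesis unfolding BSPA_SCP_def by blast
qed

lemma bspa_mic:
  assumes "1 \<le> c" "0 < \<gamma>" "\<gamma> \<le> 1" "1 \<le> k" "1 \<le> k'" "k + k' = B" "k' \<le> n_conf c \<gamma> k"
  shows "BSPA_MIC B c \<gamma> k k'"
  unfolding BSPA_MIC_def
proof (intro allI impI)
  fix bs fakes blk blk'
  assume "nonneg bs" "nonneg fakes" "honest_block B bs blk" "valid_block B (bs @ fakes) blk'"
  moreover have "coal_val bs [] = (\<lambda>_. 0)" "coal_idx bs 0 = {}" "nonneg []"
    unfolding coal_val_def coal_idx_def nonneg_def by auto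
  ultimately show "exp_util c \<gamma> k k' (bs @ fakes) blk' (fake_idx bs 0 fakes) (\<lambda>_. 0) True
      \<le> exp_util c \<gamma> k k' bs blk {} (\<lambda>_. 0) True"
    \<comment> \<open>the miner alone is the coalition with no users\<close>
    using exp_util_coalition_le[OF assms(1-3,5) _ n_conf_range(1)[OF assms(1-3,5,7)],
        where vs = "[]" and ws = "[]" and others = bs and B = B] assms(6) by simp
qed

lemma bspa_uic:
  assumes "1 \<le> c" "0 < \<gamma>" "\<gamma> \<le> 1" "1 \<le> k'" "k + k' = B" "k' \<le> n_conf c \<gamma> k"
  shows "BSPA_UIC B c \<gamma> k k'"
proof -
  have "0 \<le> \<gamma>" "k < B" using assms by auto
  from exp_util_user_le[OF this n_conf_range[OF assms(1-4,6)]]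
  show ?thesis unfolding BSPA_UIC_def by blast
qed

theorem mainTheorem3:
  fixes B c k k' :: nat and \<gamma> :: real
  assumes "1 \<le> c"
    and "0 < \<gamma>" and "\<gamma> \<le> 1"
    and "1 \<le> k" and "1 \<le> k'" and "k + k' = B"
    and "k' \<le> n_conf c \<gamma> k"
  shows "BSPA_UIC B c \<gamma> k k' \<and> BSPA_MIC B c \<gamma> k k' \<and> BSPA_SCP B c \<gamma> k k'"
  using bspa_uic[OF assms(1-3,5-7)] bspa_mic[OF assms] bspa_scp[OF assms] by blast

end
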